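(* Let $\pi,\tau\in\mathfrak{S}_m$ be non-overlapping permutations. If $\pi$ and $\tau$ are c-Wilf equivalent, then $\pi$ and $\tau$ are super-strongly c-Wilf equivalent.
   Context: The standardization $\operatorname{st}(w)$ of a word of distinct integers replaces its smallest entry by 1, the next smallest by 2, etc. For $\pi\in\mathfrak{S}_m$ and $\sigma\in\mathfrak{S}_n$, $\operatorname{Em}(\pi,\sigma)=\{i\in[n-m+1]:\operatorname{st}(\sigma_i\cdots\sigma_{i+m-1})=\pi\}$. For a set $S$ of positive integers, $a^\pi_{n,S}$ is the number of $\sigma\in\mathfrak{S}_n$ with $\operatorname{Em}(\pi,\sigma)=S$. $\pi,\tau$ are c-Wilf equivalent if $a^\pi_{n,\emptyset}=a^\tau_{n,\emptyset}$ for all $n$, and super-strongly c-Wilf equivalent if $a^\pi_{n,S}=a^\tau_{n,S}$ for all $n,S$. The overlap set is $\mathcal{O}_\pi=\{i\in[m-1]:\operatorname{st}(\pi_{i+1}\cdots\pi_m)=\operatorname{st}(\pi_1\cdots\pi_{m-i})\}$; $\pi$ is non-overlapping if $\mathcal{O}_\pi=\{m-1\}$. *)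

theory Defs
  imports "HOL-Combinatorics.Multiset_Permutations"
begin

definition Sym :: "nat \<Rightarrow> nat list set" where
  "Sym n = permutations_of_set {1..n}"

text \<open>Standardization of a word of distinct entries: each entry is replaced by its rank.\<close>
definition st :: "nat list \<Rightarrow> nat list" where
  "st w = map (\<lambda>x. card {y \<in> set w. y \<le> x}) w"

text \<open>Em(pi, sigma): positions i in [n-m+1] (1-based) where sigma_i..sigma_{i+m-1} standardizes to pi.\<close>
definition Em :: "nat list \<Rightarrow> nat list \<Rightarrow> nat set" where
  "Em p s = {i \<in> {1..length s + 1 - length p}. st (take (length p) (drop (i - 1) s)) = p}"

definition a_count :: "nat list \<Rightarrow> nat \<Rightarrow> nat set \<Rightarrow> nat" where
  "a_count p n S = card {s \<in> Sym n. Em p s = S}"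

definition c_Wilf_equiv :: "nat list \<Rightarrow> nat list \<Rightarrow> bool" where
  "c_Wilf_equiv p t \<longleftrightarrow> (\<forall>n. a_count p n {} = a_count t n {})"

definition super_strongly_c_Wilf_equiv :: "nat list \<Rightarrow> nat list \<Rightarrow> bool" where
  "super_strongly_c_Wilf_equiv p t \<longleftrightarrow> (\<forall>n S. a_count p n S = a_count t n S)"

definition overlap_set :: "nat list \<Rightarrow> nat set" where
  "overlap_set p = {i \<in> {1..length p - 1}. st (drop i p) = st (take (length p - i) p)}"

definition non_overlapping :: "nat list \<Rightarrow> bool" where
  "non_overlapping p \<longleftrightarrow> overlap_set p = {length p - 1}"

end

theory Submission
  imports Defs
begin

(*
  For a pattern p of length m let b_n(T) count the permutations of [n] with an occurrence of p
  at every position of T. The numbers a_n(S) and b_n(T) determine each other by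
  inclusion-exclusion, so it suffices to show that c-Wilf equivalence forces equal b-numbers.
  If p is non-overlapping, b_n(T) vanishes as soon as two positions of T are closer than m - 1,
  and it factors as (n choose k) b_k b_(n-k) whenever a cut point k separates the windows of T.
  The only set escaping both reductions is the chain 1, m, 2m - 1, ... of windows that share
  exactly one entry with their neighbours, and its b-number is then pinned down by a_n({})
  through inclusion-exclusion. Strong induction on n finishes the argument.
*)

definition rank_in :: "nat list \<Rightarrow> nat \<Rightarrow> nat" where
  "rank_in w x = card {y \<in> set w. y \<le> x}"

lemma st_eq_map_rank_in: "st w = map (rank_in w) w"
  unfolding st_def rank_in_def by simp

lemma length_st [simp]: "length (st w) = length w"
  unfolding st_def by simp

lemma strict_mono_on_rank_in: "strict_mono_on (set w) (rank_in w)"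
proof (rule strict_mono_onI)
  fix x y assume "x \<in> set w" "y \<in> set w" "x < y"
  then have "{z \<in> set w. z \<le> x} \<subseteq> {z \<in> set w. z \<le> y}" "y \<notin> {z \<in> set w. z \<le> x}"
    "y \<in> {z \<in> set w. z \<le> y}"
    by auto
  then have "{z \<in> set w. z \<le> x} \<subset> {z \<in> set w. z \<le> y}"
    by blast
  then show "rank_in w x < rank_in w y"
    unfolding rank_in_def by (simp add: psubset_card_mono)
qed

lemma st_map_strict_mono:
  assumes "strict_mono_on (set v) f"
  shows "st (map f v) = st v"
proof -
  have "card {y \<in> f ` set v. y \<le> f x} = card {y \<in> set v. y \<le> x}" if "x \<in> set v" for x
  proof -
    have "{y \<in> f ` set v. y \<le> f x} = f ` {y \<in> set v. y \<le> x}"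
      using that strict_mono_on_less_eq[OF assms] by auto
    moreover have "inj_on f {y \<in> set v. y \<le> x}"
      using strict_mono_on_imp_inj_on[OF assms] by (rule inj_on_subset) auto
    ultimately show ?thesis
      by (simp add: card_image)
  qed
  then show ?thesis
    unfolding st_def by simp
qed

lemma st_take_drop_st: "st (take k (drop j (st w))) = st (take k (drop j w))"
proof -
  have "take k (drop j (st w)) = map (rank_in w) (take k (drop j w))"
    by (simp add: st_eq_map_rank_in take_map drop_map)
  moreover have "strict_mono_on (set (take k (drop j w))) (rank_in w)"
    using strict_mono_on_rank_in by (rule monotone_on_subset) (meson in_set_dropD in_set_takeD subsetI)
  ultimately show ?thesis
    by (simp add: st_map_strict_mono)
qed

lemma Sym_iff: "s \<in> Sym n \<longleftrightarrow> distinct s \<and> set s = {1..n}"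
  unfolding Sym_def permutations_of_set_def by auto

lemma length_Sym: "s \<in> Sym n \<Longrightarrow> length s = n"
  by (metis Sym_iff card_atLeastAtMost diff_Suc_1 distinct_card)

lemma finite_Sym [simp]: "finite (Sym n)"
  unfolding Sym_def by simp

lemma card_Sym: "card (Sym n) = fact n"
  unfolding Sym_def by simp

lemma st_in_Sym:
  assumes "distinct w"
  shows "st w \<in> Sym (length w)"
proof -
  have "rank_in w ` set w \<subseteq> {1..length w}"
  proof
    fix z assume "z \<in> rank_in w ` set w"
    then obtain x where x: "x \<in> set w" "z = rank_in w x" by auto
    then have "x \<in> {y \<in> set w. y \<le> x}" "{y \<in> set w. y \<le> x} \<subseteq> set w"
      by auto
    then have "1 \<le> z \<and> z \<le> card (set w)"
      unfolding x rank_in_def by (metis One_nat_def Suc_leI card_gt_0_iff card_mono empty_iff finite_set finite_subset)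
    then show "z \<in> {1..length w}"
      using assms by (simp add: distinct_card)
  qed
  moreover have "inj_on (rank_in w) (set w)"
    using strict_mono_on_imp_inj_on[OF strict_mono_on_rank_in] .
  ultimately have "rank_in w ` set w = {1..length w}"
    using assms by (intro card_subset_eq) (auto simp: card_image distinct_card)
  then show ?thesis
    using \<open>inj_on (rank_in w) (set w)\<close> assms
    by (simp add: Sym_iff st_eq_map_rank_in distinct_map)
qed

lemma inj_on_st: "inj_on st (permutations_of_set A)"
proof
  fix \<alpha> \<beta> assume ab: "\<alpha> \<in> permutations_of_set A" "\<beta> \<in> permutations_of_set A" "st \<alpha> = st \<beta>"
  then have "set \<alpha> = set \<beta>"
    by (simp add: permutations_of_set_def)
  then have "map (rank_in \<alpha>) \<alpha> = map (rank_in \<alpha>) \<beta>"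
    using ab(3) by (simp add: st_eq_map_rank_in rank_in_def)
  moreover have "inj_on (rank_in \<alpha>) (set \<alpha> \<union> set \<beta>)"
    using strict_mono_on_imp_inj_on[OF strict_mono_on_rank_in, of \<alpha>] \<open>set \<alpha> = set \<beta>\<close> by simp
  ultimately show "\<alpha> = \<beta>"
    using inj_on_map_eq_map by blast
qed

lemma st_image_permutations_of_set:
  assumes "finite A"
  shows "st ` permutations_of_set A = Sym (card A)"
proof (rule card_subset_eq)
  show "st ` permutations_of_set A \<subseteq> Sym (card A)"
    using st_in_Sym by (auto simp: permutations_of_set_def distinct_card)
  show "card (st ` permutations_of_set A) = card (Sym (card A))"
    using inj_on_st assms by (simp add: card_image card_Sym)
qed simp

lemma set_drop_distinct: "distinct w \<Longrightarrow> set (drop p w) = set w - set (take p w)"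
proof -
  assume "distinct w"
  then have "distinct (take p w @ drop p w)" by simp
  then have "set (take p w) \<inter> set (drop p w) = {}" by (simp only: distinct_append)
  moreover have "set w = set (take p w) \<union> set (drop p w)"
    by (metis append_take_drop_id set_append)
  ultimately show ?thesis by blast
qed

lemma inj_on_Sym_split:
  "inj_on (\<lambda>\<sigma>. (set (take p \<sigma>), st (take p \<sigma>), st (drop p \<sigma>))) (Sym n)"
proof (rule inj_onI, clarify)
  fix \<sigma> \<sigma>' assume \<sigma>: "\<sigma> \<in> Sym n" "\<sigma>' \<in> Sym n" and A: "set (take p \<sigma>) = set (take p \<sigma>')"
    and eq: "st (take p \<sigma>) = st (take p \<sigma>')" "st (drop p \<sigma>) = st (drop p \<sigma>')"
  have "set (drop p \<sigma>) = set (drop p \<sigma>')"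
    using \<sigma> A by (simp add: Sym_iff set_drop_distinct)
  then have "take p \<sigma> = take p \<sigma>'" "drop p \<sigma> = drop p \<sigma>'"
    using \<sigma> A eq inj_on_st by (auto simp: Sym_iff inj_on_def permutations_of_set_def)
  then show "\<sigma> = \<sigma>'"
    by (metis append_take_drop_id)
qed

lemma bij_betw_Sym_split:
  assumes "p \<le> n"
  shows "bij_betw (\<lambda>\<sigma>. (set (take p \<sigma>), st (take p \<sigma>), st (drop p \<sigma>)))
           (Sym n) ({A. A \<subseteq> {1..n} \<and> card A = p} \<times> Sym p \<times> Sym (n - p))"
proof (rule bij_betw_imageI)
  show "inj_on (\<lambda>\<sigma>. (set (take p \<sigma>), st (take p \<sigma>), st (drop p \<sigma>))) (Sym n)"
    by (rule inj_on_Sym_split)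
  show "(\<lambda>\<sigma>. (set (take p \<sigma>), st (take p \<sigma>), st (drop p \<sigma>))) ` Sym n
      = {A. A \<subseteq> {1..n} \<and> card A = p} \<times> Sym p \<times> Sym (n - p)"
  proof (intro equalityI subsetI)
    fix t assume "t \<in> (\<lambda>\<sigma>. (set (take p \<sigma>), st (take p \<sigma>), st (drop p \<sigma>))) ` Sym n"
    then obtain \<sigma> where t: "t = (set (take p \<sigma>), st (take p \<sigma>), st (drop p \<sigma>))" and "\<sigma> \<in> Sym n"
      by blast
    then have "distinct \<sigma>" "set \<sigma> = {1..n}" "length \<sigma> = n"
      by (simp_all add: Sym_iff length_Sym)
    then show "t \<in> {A. A \<subseteq> {1..n} \<and> card A = p} \<times> Sym p \<times> Sym (n - p)"
      unfolding t using assms set_take_subset[of p \<sigma>] st_in_Sym[of "take p \<sigma>"] st_in_Sym[of "drop p \<sigma>"]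
      by (simp add: distinct_card)
  next
    fix t assume "t \<in> {A. A \<subseteq> {1..n} \<and> card A = p} \<times> Sym p \<times> Sym (n - p)"
    then obtain A x y where t: "t = (A, x, y)" and A: "A \<subseteq> {1..n}" "card A = p"
      and xy: "x \<in> Sym p" "y \<in> Sym (n - p)"
      by blast
    have fin: "finite A"
      using A finite_subset by blast
    have "card ({1..n} - A) = n - p"
      using A fin by (simp add: card_Diff_subset)
    then have "x \<in> st ` permutations_of_set A" "y \<in> st ` permutations_of_set ({1..n} - A)"
      using xy A fin by (simp_all add: st_image_permutations_of_set)
    then obtain \<alpha> \<beta> where \<alpha>: "\<alpha> \<in> permutations_of_set A" "st \<alpha> = x"
      and \<beta>: "\<beta> \<in> permutations_of_set ({1..n} - A)" "st \<beta> = y"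
      by blast
    have "length \<alpha> = p"
      using \<alpha> A by (metis distinct_card permutations_of_setD)
    moreover have "\<alpha> @ \<beta> \<in> Sym n"
      using \<alpha> \<beta> A by (auto simp: Sym_iff permutations_of_set_def)
    ultimately show "t \<in> (\<lambda>\<sigma>. (set (take p \<sigma>), st (take p \<sigma>), st (drop p \<sigma>))) ` Sym n"
      unfolding t using \<alpha> \<beta> by (intro image_eqI[of _ _ "\<alpha> @ \<beta>"]) (auto simp: permutations_of_set_def)
  qed
qed

lemma card_Sym_split:
  assumes "p \<le> n" "X \<subseteq> Sym p" "Y \<subseteq> Sym (n - p)"
  shows "card {\<sigma> \<in> Sym n. st (take p \<sigma>) \<in> X \<and> st (drop p \<sigma>) \<in> Y} = (n choose p) * card X * card Y"
proof -
  let ?f = "\<lambda>\<sigma>. (set (take p \<sigma>), st (take p \<sigma>), st (drop p \<sigma>))"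
  let ?C = "{A. A \<subseteq> {1..n} \<and> card A = p} \<times> X \<times> Y"
  have bij: "bij_betw ?f (Sym n) ({A. A \<subseteq> {1..n} \<and> card A = p} \<times> Sym p \<times> Sym (n - p))"
    using bij_betw_Sym_split[OF assms(1)] .
  have "?f ` {\<sigma> \<in> Sym n. ?f \<sigma> \<in> ?C} = ?f ` Sym n \<inter> ?C"
    by blast
  also have "\<dots> = ?C"
    using assms(2,3) bij_betw_imp_surj_on[OF bij] by blast
  finally have "bij_betw ?f {\<sigma> \<in> Sym n. ?f \<sigma> \<in> ?C} ?C"
    by (intro bij_betw_subset[OF bij]) auto
  then have "card {\<sigma> \<in> Sym n. ?f \<sigma> \<in> ?C} = card ?C"
    by (rule bij_betw_same_card)
  moreover have "card {A. A \<subseteq> {1..n} \<and> card A = p} = n choose p"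
    using n_subsets[of "{1..n}" p] by simp
  moreover have "{\<sigma> \<in> Sym n. ?f \<sigma> \<in> ?C} = {\<sigma> \<in> Sym n. st (take p \<sigma>) \<in> X \<and> st (drop p \<sigma>) \<in> Y}"
    using bij_betw_apply[OF bij] by fastforce
  ultimately show ?thesis
    by (simp add: card_cartesian_product)
qed

definition b_count :: "nat list \<Rightarrow> nat \<Rightarrow> nat set \<Rightarrow> nat" where
  "b_count p n T = card {s \<in> Sym n. T \<subseteq> Em p s}"

lemma Em_iff:
  "i \<in> Em p s \<longleftrightarrow> 1 \<le> i \<and> i \<le> length s + 1 - length p \<and> st (take (length p) (drop (i - 1) s)) = p"
  unfolding Em_def by auto

lemma Em_subset: "s \<in> Sym n \<Longrightarrow> Em p s \<subseteq> {1..n + 1 - length p}"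
  by (auto simp: Em_iff length_Sym)

lemma a_count_eq_0:
  assumes "\<not> S \<subseteq> {1..n + 1 - length p}"
  shows "a_count p n S = 0"
proof -
  have "{s \<in> Sym n. Em p s = S} = {}"
    using assms Em_subset by blast
  then show ?thesis
    by (simp add: a_count_def)
qed

lemma b_count_eq_0:
  assumes "\<not> T \<subseteq> {1..n + 1 - length p}"
  shows "b_count p n T = 0"
proof -
  have "{s \<in> Sym n. T \<subseteq> Em p s} = {}"
    using assms Em_subset by blast
  then show ?thesis
    by (simp add: b_count_def)
qed

lemma Em_take_iff:
  assumes "length \<sigma> = n" "q \<le> n" "1 \<le> i" "i + length p - 1 \<le> q"
  shows "i \<in> Em p \<sigma> \<longleftrightarrow> i \<in> Em p (st (take q \<sigma>))"
proof -
  have "length p \<le> q - (i - 1)"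
    using assms by linarith
  then have "take (length p) (drop (i - 1) (take q \<sigma>)) = take (length p) (drop (i - 1) \<sigma>)"
    by (simp add: drop_take min_def)
  then have "st (take (length p) (drop (i - 1) (st (take q \<sigma>)))) = st (take (length p) (drop (i - 1) \<sigma>))"
    by (simp add: st_take_drop_st)
  then show ?thesis
    using assms unfolding Em_iff by auto
qed

lemma Em_drop_iff:
  assumes "length \<sigma> = n" "q \<le> n" "q < i"
  shows "i \<in> Em p \<sigma> \<longleftrightarrow> i - q \<in> Em p (st (drop q \<sigma>))"
proof -
  have "drop (i - q - 1) (drop q \<sigma>) = drop (i - 1) \<sigma>"
    using assms by simp
  then have "st (take (length p) (drop (i - q - 1) (st (drop q \<sigma>)))) = st (take (length p) (drop (i - 1) \<sigma>))"
    by (simp add: st_take_drop_st)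
  moreover have "i \<le> n + 1 - length p \<longleftrightarrow> i - q \<le> n - q + 1 - length p"
    using assms by linarith
  ultimately show ?thesis
    using assms unfolding Em_iff by (auto simp: diff_diff_add)
qed

lemma subset_Em_split_iff:
  assumes "\<sigma> \<in> Sym n" "q \<le> n" "T \<subseteq> {1..n + 1 - length p}" "\<forall>i\<in>T. i + length p - 1 \<le> q \<or> q < i"
  shows "T \<subseteq> Em p \<sigma> \<longleftrightarrow>
    {i \<in> T. i \<le> q} \<subseteq> Em p (st (take q \<sigma>)) \<and> (\<lambda>i. i - q) ` {i \<in> T. q < i} \<subseteq> Em p (st (drop q \<sigma>))"
proof -
  have "length \<sigma> = n"
    using assms(1) by (rule length_Sym)
  have left: "i \<in> Em p \<sigma> \<longleftrightarrow> i \<in> Em p (st (take q \<sigma>))" if "i \<in> T" "i \<le> q" for i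
  proof -
    have "1 \<le> i" "i + length p - 1 \<le> q"
      using that assms(3,4) by force+
    then show ?thesis
      using Em_take_iff[OF \<open>length \<sigma> = n\<close> assms(2)] by simp
  qed
  have right: "i \<in> Em p \<sigma> \<longleftrightarrow> i - q \<in> Em p (st (drop q \<sigma>))" if "q < i" for i
    using Em_drop_iff[OF \<open>length \<sigma> = n\<close> assms(2) that] .
  show ?thesis
  proof
    assume "T \<subseteq> Em p \<sigma>"
    then show "{i \<in> T. i \<le> q} \<subseteq> Em p (st (take q \<sigma>)) \<and> (\<lambda>i. i - q) ` {i \<in> T. q < i} \<subseteq> Em p (st (drop q \<sigma>))"
      using left right by auto
  next
    assume halves: "{i \<in> T. i \<le> q} \<subseteq> Em p (st (take q \<sigma>)) \<and> (\<lambda>i. i - q) ` {i \<in> T. q < i} \<subseteq> Em p (st (drop q \<sigma>))"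
    show "T \<subseteq> Em p \<sigma>"
    proof
      fix i assume "i \<in> T"
      then show "i \<in> Em p \<sigma>"
        using left right halves by (cases "i \<le> q") auto
    qed
  qed
qed

lemma b_count_split:
  assumes "q \<le> n" "T \<subseteq> {1..n + 1 - length p}" "\<forall>i\<in>T. i + length p - 1 \<le> q \<or> q < i"
  shows "b_count p n T
    = (n choose q) * b_count p q {i \<in> T. i \<le> q} * b_count p (n - q) ((\<lambda>i. i - q) ` {i \<in> T. q < i})"
proof -
  define X where "X = {\<alpha> \<in> Sym q. {i \<in> T. i \<le> q} \<subseteq> Em p \<alpha>}"
  define Y where "Y = {\<beta> \<in> Sym (n - q). (\<lambda>i. i - q) ` {i \<in> T. q < i} \<subseteq> Em p \<beta>}"
  have halves_Sym: "st (take q \<sigma>) \<in> Sym q" "st (drop q \<sigma>) \<in> Sym (n - q)" if "\<sigma> \<in> Sym n" for \<sigma>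
  proof -
    have "length \<sigma> = n" "distinct \<sigma>"
      using that by (simp_all add: length_Sym Sym_iff)
    then show "st (take q \<sigma>) \<in> Sym q" "st (drop q \<sigma>) \<in> Sym (n - q)"
      using st_in_Sym[of "take q \<sigma>"] st_in_Sym[of "drop q \<sigma>"] assms(1) by simp_all
  qed
  have "{s \<in> Sym n. T \<subseteq> Em p s} = {\<sigma> \<in> Sym n. st (take q \<sigma>) \<in> X \<and> st (drop q \<sigma>) \<in> Y}"
  proof (intro Collect_cong conj_cong[OF refl])
    fix \<sigma> assume "\<sigma> \<in> Sym n"
    then show "T \<subseteq> Em p \<sigma> \<longleftrightarrow> st (take q \<sigma>) \<in> X \<and> st (drop q \<sigma>) \<in> Y"
      using subset_Em_split_iff[OF _ assms] halves_Sym unfolding X_def Y_def by simp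
  qed
  moreover have "card {\<sigma> \<in> Sym n. st (take q \<sigma>) \<in> X \<and> st (drop q \<sigma>) \<in> Y} = (n choose q) * card X * card Y"
    using assms(1) by (intro card_Sym_split) (auto simp: X_def Y_def)
  ultimately show ?thesis
    by (simp add: b_count_def X_def Y_def)
qed

lemma Em_distance_in_overlap_set:
  assumes "i \<in> Em p \<sigma>" "j \<in> Em p \<sigma>" "i < j" "j - i < length p"
  shows "j - i \<in> overlap_set p"
proof -
  define m d where "m = length p" and "d = j - i"
  define u v where "u = take m (drop (i - 1) \<sigma>)" and "v = take m (drop (j - 1) \<sigma>)"
  have "st u = p" "st v = p" "1 \<le> i" "j \<le> length \<sigma> + 1 - m"
    using assms(1,2) by (auto simp: Em_iff u_def v_def m_def)
  have "drop d u = take (m - d) (drop (j - 1) \<sigma>)"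
    unfolding u_def d_def using assms(3) \<open>1 \<le> i\<close> by (simp add: drop_take)
  also have "\<dots> = take (m - d) v"
    unfolding v_def by (simp add: min_def)
  finally have overlap: "drop d u = take (m - d) v" .
  have "st (drop d p) = st (take (m - d) (drop d p))"
    by (simp add: m_def)
  also have "\<dots> = st (take (m - d) (drop d u))"
    using st_take_drop_st[of "m - d" d u] \<open>st u = p\<close> by simp
  also have "\<dots> = st (take (m - d) v)"
    using overlap by simp
  also have "\<dots> = st (take (m - d) p)"
    using st_take_drop_st[of "m - d" 0 v] \<open>st v = p\<close> by simp
  finally show ?thesis
    unfolding overlap_set_def using assms(3,4) by (auto simp: m_def d_def)
qed

lemma b_count_eq_0_if_close:
  assumes "non_overlapping p" "i \<in> T" "j \<in> T" "i < j" "j - i < length p - 1"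
  shows "b_count p n T = 0"
proof -
  have "\<not> T \<subseteq> Em p \<sigma>" for \<sigma>
  proof
    assume "T \<subseteq> Em p \<sigma>"
    then have "j - i \<in> overlap_set p"
      using assms(2-5) by (intro Em_distance_in_overlap_set) auto
    then show False
      using assms(1,5) by (simp add: non_overlapping_def)
  qed
  then show ?thesis
    by (simp add: b_count_def)
qed

lemma b_count_eq_sum_a_count:
  assumes "X \<subseteq> {1..n + 1 - length p}"
  shows "b_count p n ({1..n + 1 - length p} - X) = (\<Sum>Y\<in>Pow X. a_count p n ({1..n + 1 - length p} - Y))"
proof -
  define U where "U = {1..n + 1 - length p}"
  have "{s \<in> Sym n. U - X \<subseteq> Em p s} = (\<Union>Y\<in>Pow X. {s \<in> Sym n. Em p s = U - Y})"
  proof (intro equalityI subsetI)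
    fix s assume s: "s \<in> {s \<in> Sym n. U - X \<subseteq> Em p s}"
    then have "Em p s = U - (U - Em p s)" "U - Em p s \<in> Pow X"
      using Em_subset unfolding U_def by auto
    then show "s \<in> (\<Union>Y\<in>Pow X. {s \<in> Sym n. Em p s = U - Y})"
      using s by blast
  qed auto
  moreover have "card (\<Union>Y\<in>Pow X. {s \<in> Sym n. Em p s = U - Y}) = (\<Sum>Y\<in>Pow X. card {s \<in> Sym n. Em p s = U - Y})"
  proof (rule card_UN_disjoint)
    show "finite (Pow X)"
      using assms finite_subset by (auto simp: U_def)
    show "\<forall>Y\<in>Pow X. \<forall>Y'\<in>Pow X. Y \<noteq> Y' \<longrightarrow> {s \<in> Sym n. Em p s = U - Y} \<inter> {s \<in> Sym n. Em p s = U - Y'} = {}"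
      using assms unfolding U_def by blast
  qed simp
  ultimately show ?thesis
    unfolding b_count_def a_count_def U_def by simp
qed

lemma a_count_inclusion_exclusion:
  assumes "S \<subseteq> {1..n + 1 - length p}"
  shows "int (a_count p n ({1..n + 1 - length p} - S))
    = (\<Sum>T\<in>Pow S. (-1) ^ (card S - card T) * int (b_count p n ({1..n + 1 - length p} - T)))"
proof -
  define U where "U = {1..n + 1 - length p}"
  define f where "f Y = int (a_count p n (U - Y))" for Y
  have "finite S"
    using assms finite_subset by auto
  have "f S = (\<Sum>T\<in>Pow S. (-1) ^ (card S - card T) * sum f (Pow T))"
    by (rule inclusion_exclusion_mobius[OF _ \<open>finite S\<close>]) simp
  also have "\<dots> = (\<Sum>T\<in>Pow S. (-1) ^ (card S - card T) * int (b_count p n (U - T)))"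
  proof (rule sum.cong[OF refl])
    fix T assume "T \<in> Pow S"
    then have "T \<subseteq> U"
      using assms unfolding U_def by auto
    then show "(-1) ^ (card S - card T) * sum f (Pow T) = (-1) ^ (card S - card T) * int (b_count p n (U - T))"
      using b_count_eq_sum_a_count[of T n p] unfolding f_def U_def by (simp add: of_nat_sum)
  qed
  finally show ?thesis
    unfolding f_def U_def .
qed

lemma a_count_eq_if_b_count_eq:
  assumes "length q = length p" "\<And>T. b_count p n T = b_count q n T"
  shows "a_count p n S = a_count q n S"
proof (cases "S \<subseteq> {1..n + 1 - length p}")
  case False
  then show ?thesis
    using assms(1) by (simp add: a_count_eq_0)
next
  case True
  define U where "U = {1..n + 1 - length p}"
  have "S = U - (U - S)"
    using True unfolding U_def by blast
  moreover have "int (a_count p n (U - (U - S))) = int (a_count q n (U - (U - S)))"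
    using a_count_inclusion_exclusion[of "U - S" n p] a_count_inclusion_exclusion[of "U - S" n q]
      assms unfolding U_def by simp
  ultimately show ?thesis
    by simp
qed

lemma b_count_eq_if_a_count_empty_eq:
  assumes "length q = length p" "a_count p n {} = a_count q n {}"
    and "\<And>T. T \<noteq> T\<^sub>0 \<Longrightarrow> b_count p n T = b_count q n T"
  shows "b_count p n T\<^sub>0 = b_count q n T\<^sub>0"
proof (cases "T\<^sub>0 \<subseteq> {1..n + 1 - length p}")
  case False
  then show ?thesis
    using assms(1) by (simp add: b_count_eq_0)
next
  case True
  define U where "U = {1..n + 1 - length p}"
  define c where "c T = (-1::int) ^ (card U - card T)" for T :: "nat set"
  define F where "F r = (\<Sum>T\<in>Pow U - {U - T\<^sub>0}. c T * int (b_count r n (U - T)))" for r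
  have "finite (Pow U)" "U - T\<^sub>0 \<in> Pow U" "U - (U - T\<^sub>0) = T\<^sub>0"
    using True by (auto simp: U_def)
  have sum: "int (a_count r n {}) = c (U - T\<^sub>0) * int (b_count r n T\<^sub>0) + F r"
    if "length r = length p" for r
  proof -
    have "int (a_count r n {}) = (\<Sum>T\<in>Pow U. c T * int (b_count r n (U - T)))"
      using a_count_inclusion_exclusion[of U n r] that by (simp add: U_def c_def)
    also have "\<dots> = c (U - T\<^sub>0) * int (b_count r n (U - (U - T\<^sub>0))) + F r"
      unfolding F_def by (rule sum.remove) fact+
    finally show ?thesis
      using \<open>U - (U - T\<^sub>0) = T\<^sub>0\<close> by simp
  qed
  have "F p = F q"
    unfolding F_def
  proof (rule sum.cong[OF refl])
    fix T assume "T \<in> Pow U - {U - T\<^sub>0}"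
    then have "U - T \<noteq> T\<^sub>0"
      using \<open>U - (U - T\<^sub>0) = T\<^sub>0\<close> by blast
    then show "c T * int (b_count p n (U - T)) = c T * int (b_count q n (U - T))"
      using assms(3) by simp
  qed
  then have "c (U - T\<^sub>0) * int (b_count p n T\<^sub>0) = c (U - T\<^sub>0) * int (b_count q n T\<^sub>0)"
    using sum[of p] sum[of q] assms(1,2) by linarith
  then show ?thesis
    by (simp add: c_def)
qed

(* Positions 1, m, 2m - 1, ...: consecutive windows of length m share exactly one entry. *)
definition full_chain :: "nat \<Rightarrow> nat \<Rightarrow> nat set" where
  "full_chain m n = {i \<in> {1..n + 1 - m}. (m - 1) dvd (i - 1)}"

context
  fixes m n :: nat and T :: "nat set"
  assumes length_ge_2: "2 \<le> m"
    and T_subset: "T \<subseteq> {1..n + 1 - m}"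
    and spaced: "\<And>i j. i \<in> T \<Longrightarrow> j \<in> T \<Longrightarrow> i < j \<Longrightarrow> m - 1 \<le> j - i"
    and covering: "\<And>q. 0 < q \<Longrightarrow> q < n \<Longrightarrow> \<exists>i\<in>T. i \<le> q \<and> q < i + m - 1"
begin

lemma chain_step_down:
  assumes "i \<in> T" "2 \<le> i"
  shows "m \<le> i \<and> i - (m - 1) \<in> T"
proof -
  have "i \<le> n + 1 - m"
    using assms T_subset by auto
  then have "0 < i - 1" "i - 1 < n"
    using assms length_ge_2 by linarith+
  then obtain t where t: "t \<in> T" "t \<le> i - 1" "i - 1 < t + m - 1"
    using covering by blast
  then have "m - 1 \<le> i - t" "1 \<le> t"
    using spaced[of t i] assms T_subset by auto
  then have "t = i - (m - 1)" "m \<le> i"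
    using t by auto
  then show ?thesis
    using t by simp
qed

lemma chain_step_up:
  assumes "i \<in> T" "i + (m - 1) \<le> n + 1 - m"
  shows "i + (m - 1) \<in> T"
proof -
  have "0 < i + m - 1" "i + m - 1 < n"
    using assms length_ge_2 by linarith+
  then obtain t where t: "t \<in> T" "t \<le> i + m - 1" "i + m - 1 < t + m - 1"
    using covering by blast
  then have "m - 1 \<le> t - i"
    using spaced[of i t] assms by auto
  then have "t = i + (m - 1)"
    using t by auto
  then show ?thesis
    using t by simp
qed

lemma one_mem_chain:
  assumes "full_chain m n \<noteq> {}"
  shows "1 \<in> T"
proof -
  have "n + 1 - m \<ge> 1"
    using assms by (auto simp: full_chain_def)
  then have "1 < n"
    using length_ge_2 by linarith
  then obtain i where "i \<in> T"
    using covering[of 1] by auto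
  moreover have "finite T"
    using finite_subset[OF T_subset] by simp
  ultimately have "Min T \<in> T" "\<forall>j\<in>T. Min T \<le> j"
    by (auto intro: Min_in)
  show ?thesis
  proof (rule ccontr)
    assume "1 \<notin> T"
    then have "Min T \<noteq> 1" "1 \<le> Min T"
      using \<open>Min T \<in> T\<close> T_subset by auto
    then have "2 \<le> Min T"
      by linarith
    then have "Min T - (m - 1) \<in> T" "Min T - (m - 1) < Min T"
      using chain_step_down[OF \<open>Min T \<in> T\<close>] length_ge_2 by auto
    then show False
      using \<open>\<forall>j\<in>T. Min T \<le> j\<close> by (meson not_le)
  qed
qed

lemma chain_subset_full_chain: "T \<subseteq> full_chain m n"
proof -
  have "(m - 1) dvd (i - 1)" if "i \<in> T" for i
    using that
  proof (induction i rule: less_induct)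
    case (less i)
    show ?case
    proof (cases "2 \<le> i")
      case True
      then have "m \<le> i" and prev: "i - (m - 1) \<in> T"
        using chain_step_down less.prems by auto
      moreover have "i - (m - 1) < i"
        using \<open>m \<le> i\<close> length_ge_2 by simp
      ultimately have "(m - 1) dvd (i - (m - 1) - 1)"
        using less.IH[OF _ prev] by simp
      then have "(m - 1) dvd (i - m)"
        using length_ge_2 by (simp add: diff_diff_add)
      moreover have "i - 1 = (i - m) + (m - 1)"
        using \<open>m \<le> i\<close> length_ge_2 by simp
      ultimately show ?thesis
        by simp
    next
      case False
      then show ?thesis
        using less.prems T_subset by (auto simp: le_Suc_eq)
    qed
  qed
  then show "T \<subseteq> full_chain m n"
    using T_subset by (auto simp: full_chain_def)
qed

lemma full_chain_subset_chain: "full_chain m n \<subseteq> T"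
proof -
  have progression: "1 + (m - 1) * k \<in> T" if "1 + (m - 1) * k \<le> n + 1 - m" for k
    using that
  proof (induction k)
    case 0
    then have "1 \<in> full_chain m n"
      by (simp add: full_chain_def)
    then show ?case
      using one_mem_chain by auto
  next
    case (Suc k)
    then have "1 + (m - 1) * k \<in> T"
      by simp
    then show ?case
      using chain_step_up[of "1 + (m - 1) * k"] Suc.prems by (simp add: add.commute)
  qed
  show ?thesis
  proof
    fix i assume "i \<in> full_chain m n"
    then have i: "1 \<le> i" "i \<le> n + 1 - m" "(m - 1) dvd (i - 1)"
      by (auto simp: full_chain_def)
    then obtain k where "i = 1 + (m - 1) * k"
      by (metis add.commute dvdE le_add_diff_inverse2)
    then show "i \<in> T"
      using progression i(2) by simp
  qed
qed

lemma chain_eq_full_chain: "T = full_chain m n"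
  using chain_subset_full_chain full_chain_subset_chain by (rule antisym)

end

lemma length_ge_2_if_non_overlapping:
  assumes "non_overlapping p"
  shows "2 \<le> length p"
proof (rule ccontr)
  assume "\<not> 2 \<le> length p"
  then have "overlap_set p = {}"
    by (auto simp: overlap_set_def)
  then show False
    using assms by (simp add: non_overlapping_def)
qed

lemma b_count_eq_off_full_chain:
  assumes p: "non_overlapping p" and q: "non_overlapping q" and len: "length q = length p"
    and IH: "\<And>n' T. n' < n \<Longrightarrow> b_count p n' T = b_count q n' T"
    and not_chain: "T \<noteq> full_chain (length p) n"
  shows "b_count p n T = b_count q n T"
proof -
  define m where "m = length p"
  have "2 \<le> m"
    using length_ge_2_if_non_overlapping[OF p] by (simp add: m_def)
  consider (outside) "\<not> T \<subseteq> {1..n + 1 - m}"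
    | (close) i j where "i \<in> T" "j \<in> T" "i < j" "j - i < m - 1"
    | (cut) k where "0 < k" "k < n" "\<forall>i\<in>T. i + m - 1 \<le> k \<or> k < i" "T \<subseteq> {1..n + 1 - m}"
    | (chain) "T \<subseteq> {1..n + 1 - m}" "\<And>i j. i \<in> T \<Longrightarrow> j \<in> T \<Longrightarrow> i < j \<Longrightarrow> m - 1 \<le> j - i"
        "\<And>r. 0 < r \<Longrightarrow> r < n \<Longrightarrow> \<exists>i\<in>T. i \<le> r \<and> r < i + m - 1"
    by (metis not_le not_less)
  then show ?thesis
  proof cases
    case outside
    then show ?thesis
      using len by (simp add: b_count_eq_0 m_def)
  next
    case close
    then show ?thesis
      using b_count_eq_0_if_close[OF p] b_count_eq_0_if_close[OF q] len by (simp add: m_def)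
  next
    case cut
    have split: "b_count r n T
      = (n choose k) * b_count r k {i \<in> T. i \<le> k} * b_count r (n - k) ((\<lambda>i. i - k) ` {i \<in> T. k < i})"
      if "length r = m" for r
      using cut that by (intro b_count_split) auto
    show ?thesis
      using split[of p] split[of q] IH[of k] IH[of "n - k"] cut len by (simp add: m_def)
  next
    case chain
    then show ?thesis
      using chain_eq_full_chain[OF \<open>2 \<le> m\<close>] not_chain by (simp add: m_def)
  qed
qed

lemma b_count_eq_if_c_Wilf_equiv:
  assumes "non_overlapping p" "non_overlapping q" "length q = length p" "c_Wilf_equiv p q"
  shows "b_count p n T = b_count q n T"
proof (induction n arbitrary: T rule: less_induct)
  case (less n)
  have off_chain: "b_count p n T' = b_count q n T'" if "T' \<noteq> full_chain (length p) n" for T'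
    using b_count_eq_off_full_chain[OF assms(1-3) less.IH that] .
  show ?case
  proof (cases "T = full_chain (length p) n")
    case True
    have "a_count p n {} = a_count q n {}"
      using assms(4) by (simp add: c_Wilf_equiv_def)
    with True show ?thesis
      using b_count_eq_if_a_count_empty_eq[OF assms(3)] off_chain by blast
  next
    case False
    then show ?thesis
      using off_chain by blast
  qed
qed

theorem theorem5p4:
  fixes m :: nat and \<pi> \<tau> :: "nat list"
  assumes "\<pi> \<in> Sym m" and "\<tau> \<in> Sym m"
    and "non_overlapping \<pi>" and "non_overlapping \<tau>"
    and "c_Wilf_equiv \<pi> \<tau>"
  shows "super_strongly_c_Wilf_equiv \<pi> \<tau>"
proof -
  have "length \<tau> = length \<pi>"
    using assms(1,2) by (simp add: length_Sym)
  then show ?thesis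
    unfolding super_strongly_c_Wilf_equiv_def
    using a_count_eq_if_b_count_eq b_count_eq_if_c_Wilf_equiv[OF assms(3,4)] assms(5) by blast
qed

end
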